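(* Let $Y\in\mathbb{R}^{N\times M}$, $k\ge1$, and $\alpha,\nu,\gamma\ge0$. Consider $$\min_{A\in\mathbb{R}^{N\times k},\,P\in\mathbb{R}^{k\times M},\ A\ge0,\ P\ge0} J(A,P):=\|Y-AP\|_{F,2}^2+\alpha\|A\|_{F,1}+\nu\|P\|_{F,1}+\gamma\|PP^T-I\|_{F,1},$$ where $I$ is the $k\times k$ identity. If $(A,P)$ is a (local) minimizer of this problem, then for any constants $c_1,c_2>0$ there exist matrices $L\in\mathbb{R}^{k\times k}$, $\mu_A,\lambda_A\in\mathbb{R}^{N\times k}$, $\mu_P,\lambda_P\in\mathbb{R}^{k\times M}$, $\lambda_L\in\mathbb{R}^{k\times k}$ such that $$\begin{cases} 0=2APP^T-2YP^T+\mu_A+\alpha\lambda_A,\\ \lambda_A=\dfrac{\lambda_A+c_2A}{\max(1,|\lambda_A+c_2A|)},\\ \mu_A=\min(\mu_A+c_1A,0),\\ 0=-2A^TY+2A^TAP+\mu_P+\nu\lambda_P+\gamma(\lambda_L+\lambda_L^T)P,\\ \lambda_P=\dfrac{\lambda_P+c_2P}{\max(1,|\lambda_P+c_2P|)},\\ L=PP^T-I,\\ \lambda_L=\dfrac{\lambda_L+c_2L}{\max(1,|\lambda_L+c_2L|)},\\ \mu_P=\min(\mu_P+c_1P,0), \end{cases}$$ where division, maximum, minimum and absolute value are taken entrywise.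
   Context: For a matrix $X$, $\|X\|_{F,2}=\sqrt{\sum_{i,j}|X_{ij}|^2}$ and $\|X\|_{F,1}=\sum_{i,j}|X_{ij}|$; $A\ge0$ means entrywise nonnegativity. Necessary optimality is understood in the sense of generalized (Clarke) subdifferential calculus for this nonsmooth, nonconvex problem. *)

theory Defs
  imports "HOL-Analysis.Analysis"
begin

text \<open>Matrices are rendered as Cartesian-space matrices: a matrix in R^(r x c) is
  a value of type real^'c^'r, entry (i,j) is X$i$j. Dimensions are type-indexed,
  hence arbitrary but fixed and automatically at least 1.\<close>

definition frob2 :: "real^'c^'r \<Rightarrow> real" where
  "frob2 X = sqrt (\<Sum>i\<in>UNIV. \<Sum>j\<in>UNIV. \<bar>X$i$j\<bar>^2)"

definition frob1 :: "real^'c^'r \<Rightarrow> real" where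
  "frob1 X = (\<Sum>i\<in>UNIV. \<Sum>j\<in>UNIV. \<bar>X$i$j\<bar>)"

definition nonneg_mat :: "real^'c^'r \<Rightarrow> bool" where
  "nonneg_mat X \<longleftrightarrow> (\<forall>i j. 0 \<le> X$i$j)"

definition Jobj :: "real^'m^'n \<Rightarrow> real \<Rightarrow> real \<Rightarrow> real \<Rightarrow> real^'k^'n \<Rightarrow> real^'m^'k \<Rightarrow> real" where
  "Jobj Y \<alpha> \<nu> \<gamma> A P =
     (frob2 (Y - A ** P))^2 + \<alpha> * frob1 A + \<nu> * frob1 P
     + \<gamma> * frob1 (P ** transpose P - mat 1)"

definition local_min_J :: "real^'m^'n \<Rightarrow> real \<Rightarrow> real \<Rightarrow> real \<Rightarrow> real^'k^'n \<Rightarrow> real^'m^'k \<Rightarrow> bool" where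
  "local_min_J Y \<alpha> \<nu> \<gamma> A P \<longleftrightarrow>
     nonneg_mat A \<and> nonneg_mat P \<and>
     (\<exists>e>0. \<forall>A' P'. nonneg_mat A' \<longrightarrow> nonneg_mat P' \<longrightarrow> dist A' A < e \<longrightarrow> dist P' P < e
        \<longrightarrow> Jobj Y \<alpha> \<nu> \<gamma> A P \<le> Jobj Y \<alpha> \<nu> \<gamma> A' P')"

end

theory Submission
  imports Defs
begin

text \<open>At a local minimiser every feasible direction D (nonnegative wherever the variable
  vanishes) has a nonnegative one-sided derivative of J. On the nonnegative orthant the two
  l1-penalties on A and P are linear, so in A this is the usual complementarity system with
  lambda_A = 1. The term gamma |P P^T - I|_1 is only directionally differentiable: its
  derivative in direction D is the maximum of the Frobenius product of Lambda with
  P D^T + D P^T over the subdifferential of |.|_1 at P P^T - I. Separating the compact convex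
  set of the resulting gradients from the closed convex cone of admissible values of -mu_P
  produces a single Lambda = lambda_L that serves all directions at once. The projection
  formulas of the theorem are the fixpoint characterisations of subgradients of |.| and of
  complementarity.\<close>

lemma inner_matrix_eq_sum:
  "inner (X :: real^'c^'r) Z = (\<Sum>i\<in>UNIV. \<Sum>j\<in>UNIV. X$i$j * Z$i$j)"
  by (simp add: inner_vec_def)

lemma frob2_eq_norm: "frob2 X = norm X"
  by (simp add: frob2_def norm_eq_sqrt_inner inner_matrix_eq_sum power2_eq_square)

lemma transpose_add: "transpose (A + B) = transpose A + transpose (B :: 'a::semiring_1^'n^'m)"
  by (simp add: transpose_def vec_eq_iff)

lemma matrix_add_rdistrib: "(A + B) ** C = A ** C + B ** (C :: 'a::semiring_1^'p^'n)"
  by (simp add: matrix_matrix_mult_def vec_eq_iff sum.distrib distrib_right)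

lemma matrix_diff_ldistrib: "A ** (B - C) = A ** B - A ** (C :: 'a::ring_1^'p^'n)"
  by (simp add: matrix_matrix_mult_def vec_eq_iff sum_subtractf right_diff_distrib)

lemma matrix_diff_rdistrib: "(A - B) ** C = A ** C - B ** (C :: 'a::ring_1^'p^'n)"
  by (simp add: matrix_matrix_mult_def vec_eq_iff sum_subtractf left_diff_distrib)

lemma inner_transpose: "inner (transpose X) (transpose Z) = inner (X :: real^'c^'r) Z"
  by (simp add: inner_matrix_eq_sum transpose_def) (rule sum.swap)

lemma inner_matrix_mult_left:
  "inner X (A ** B) = inner (transpose A ** X) (B :: real^'p^'n)"
proof -
  have "inner X (A ** B) = (\<Sum>i\<in>UNIV. \<Sum>j\<in>UNIV. \<Sum>k\<in>UNIV. X$i$j * A$i$k * B$k$j)"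
    by (simp add: inner_matrix_eq_sum matrix_matrix_mult_def sum_distrib_left mult.assoc)
  also have "\<dots> = (\<Sum>i\<in>UNIV. \<Sum>k\<in>UNIV. \<Sum>j\<in>UNIV. X$i$j * A$i$k * B$k$j)"
    by (intro sum.cong refl sum.swap)
  also have "\<dots> = (\<Sum>k\<in>UNIV. \<Sum>i\<in>UNIV. \<Sum>j\<in>UNIV. X$i$j * A$i$k * B$k$j)"
    by (rule sum.swap)
  also have "\<dots> = (\<Sum>k\<in>UNIV. \<Sum>j\<in>UNIV. \<Sum>i\<in>UNIV. X$i$j * A$i$k * B$k$j)"
    by (intro sum.cong refl sum.swap)
  also have "\<dots> = inner (transpose A ** X) B"
    by (simp add: inner_matrix_eq_sum matrix_matrix_mult_def transpose_def sum_distrib_left mult_ac)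
  finally show ?thesis .
qed

lemma inner_matrix_mult_right:
  "inner X (A ** B) = inner (X ** transpose B) (A :: real^'p^'n)"
proof -
  have "inner X (A ** B) = inner (transpose X) (transpose B ** transpose A)"
    using inner_transpose[of X "A ** B"] by (simp add: matrix_transpose_mul)
  also have "\<dots> = inner (B ** transpose X) (transpose A)"
    by (simp add: inner_matrix_mult_left)
  also have "\<dots> = inner (X ** transpose B) A"
    using inner_transpose[of "X ** transpose B" A] by (simp add: matrix_transpose_mul)
  finally show ?thesis .
qed

lemma inner_symmetrized_product:
  "inner \<Lambda> (P ** transpose D + D ** transpose P) = inner ((\<Lambda> + transpose \<Lambda>) ** P) (D :: real^'m^'k)"
proof -
  have "inner \<Lambda> (P ** transpose D) = inner (transpose \<Lambda> ** P) D"
    using inner_transpose[of "transpose (transpose P ** \<Lambda>)" D]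
    by (simp add: inner_matrix_mult_left matrix_transpose_mul)
  moreover have "inner \<Lambda> (D ** transpose P) = inner (\<Lambda> ** P) D"
    by (simp add: inner_matrix_mult_right)
  ultimately show ?thesis
    by (simp add: inner_add_right inner_add_left matrix_add_rdistrib)
qed

lemma linear_symmetrized_product: "linear (\<lambda>\<Lambda>. (\<Lambda> + transpose \<Lambda>) ** (P :: real^'m^'k))"
  by (rule linearI)
     (simp_all add: transpose_add transpose_scalar matrix_add_rdistrib
        scalar_matrix_assoc[symmetric] scaleR_add_right)

lemma norm_diff_scaleR_power2:
  fixes x y :: "'a::real_inner"
  shows "(norm (x - t *\<^sub>R y))^2 = (norm x)^2 - 2 * t * inner x y + t^2 * (norm y)^2"
  unfolding power2_norm_eq_inner
  by (simp add: inner_diff_left inner_diff_right inner_commute power2_eq_square algebra_simps)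

lemma gram_add_scaleR:
  fixes P D :: "real^'m^'k"
  shows "(P + t *\<^sub>R D) ** transpose (P + t *\<^sub>R D) - mat 1
    = (P ** transpose P - mat 1) + t *\<^sub>R (P ** transpose D + D ** transpose P)
      + t^2 *\<^sub>R (D ** transpose D)"
  by (simp add: transpose_add transpose_scalar matrix_add_ldistrib matrix_add_rdistrib
      matrix_scalar_ac scalar_matrix_assoc[symmetric] scaleR_add_right power2_eq_square)

lemma frob1_add_nonneg:
  assumes "nonneg_mat X" and "nonneg_mat (X + D)"
  shows "frob1 (X + D) = frob1 X + inner D (\<chi> i j. 1)"
  using assms by (simp add: frob1_def nonneg_mat_def inner_matrix_eq_sum sum.distrib)

definition abs_dir_deriv :: "real \<Rightarrow> real \<Rightarrow> real" where
  "abs_dir_deriv x d = (if x = 0 then \<bar>d\<bar> else sgn x * d)"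

definition abs_subgradient :: "real \<Rightarrow> real \<Rightarrow> bool" where
  "abs_subgradient x l \<longleftrightarrow> (if x = 0 then \<bar>l\<bar> \<le> 1 else l = sgn x)"

lemma eventually_abs_add_quadratic_le:
  fixes x d e :: real
  shows "\<forall>\<^sub>F t in at_right 0. \<bar>x + t * d + t^2 * e\<bar> \<le> \<bar>x\<bar> + t * abs_dir_deriv x d + t^2 * \<bar>e\<bar>"
proof (cases "x = 0")
  case True
  show ?thesis
    using eventually_at_right_less[of 0]
    by eventually_elim (auto simp: True abs_dir_deriv_def abs_mult intro: order.trans[OF abs_triangle_ineq])
next
  case False
  have "((\<lambda>t. x * (x + t * d + t^2 * e)) \<longlongrightarrow> x * x) (at_right 0)"
    by (intro tendsto_eq_intros) auto
  moreover have "0 < x * x" using False by (auto simp: zero_less_mult_iff linorder_neq_iff)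
  ultimately have "\<forall>\<^sub>F t in at_right 0. 0 < x * (x + t * d + t^2 * e)"
    by (rule order_tendstoD)
  then show ?thesis
  proof eventually_elim
    case (elim t)
    then have "\<bar>x + t * d + t^2 * e\<bar> = sgn x * (x + t * d + t^2 * e)"
      by (auto simp: sgn_if zero_less_mult_iff)
    also have "\<dots> \<le> \<bar>x\<bar> + t * (sgn x * d) + t^2 * \<bar>e\<bar>"
      using mult_right_mono[of "sgn x * e" "\<bar>e\<bar>" "t^2"]
      by (auto simp: sgn_if algebra_simps)
    finally show ?case using False by (simp add: abs_dir_deriv_def)
  qed
qed

lemma eventually_frob1_add_quadratic_le:
  fixes X D E :: "real^'c^'r"
  shows "\<forall>\<^sub>F t in at_right 0. frob1 (X + t *\<^sub>R D + t^2 *\<^sub>R E)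
    \<le> frob1 X + t * (\<Sum>i\<in>UNIV. \<Sum>j\<in>UNIV. abs_dir_deriv (X$i$j) (D$i$j)) + t^2 * frob1 E"
proof -
  have "\<forall>\<^sub>F t in at_right 0. \<forall>i j. \<bar>X$i$j + t * D$i$j + t^2 * E$i$j\<bar>
      \<le> \<bar>X$i$j\<bar> + t * abs_dir_deriv (X$i$j) (D$i$j) + t^2 * \<bar>E$i$j\<bar>"
    by (intro eventually_all_finite allI eventually_abs_add_quadratic_le)
  then show ?thesis
  proof eventually_elim
    case (elim t)
    then have "frob1 (X + t *\<^sub>R D + t^2 *\<^sub>R E) \<le> (\<Sum>i\<in>UNIV. \<Sum>j\<in>UNIV.
        \<bar>X$i$j\<bar> + t * abs_dir_deriv (X$i$j) (D$i$j) + t^2 * \<bar>E$i$j\<bar>)"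
      unfolding frob1_def by (intro sum_mono) simp
    then show ?case
      by (simp add: frob1_def sum.distrib sum_distrib_left)
  qed
qed

lemma abs_subgradient_proj_fixpoint:
  assumes "abs_subgradient x l" and "0 < c"
  shows "l = (l + c * x) / max 1 \<bar>l + c * x\<bar>"
proof (cases "x = 0")
  case True
  then show ?thesis using assms by (simp add: abs_subgradient_def max_def)
next
  case False
  then have l: "l = sgn x" using assms by (simp add: abs_subgradient_def)
  have eq: "l + c * x = sgn x * (1 + c * \<bar>x\<bar>)"
    using False by (cases "x > 0") (auto simp: l sgn_if algebra_simps)
  have "\<bar>l + c * x\<bar> = 1 + c * \<bar>x\<bar>"
    using False \<open>0 < c\<close> by (simp add: eq abs_mult sgn_if)
  then have "max 1 \<bar>l + c * x\<bar> = 1 + c * \<bar>x\<bar>"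
    using \<open>0 < c\<close> by simp
  moreover have "0 < 1 + c * \<bar>x\<bar>"
    using \<open>0 < c\<close> by (simp add: add_pos_nonneg)
  ultimately show ?thesis
    by (simp only: eq) (simp add: l)
qed

lemma convex_abs_subgradient: "convex {l. abs_subgradient x l}"
proof (cases "x = 0")
  case True
  then have "{l. abs_subgradient x l} = cball 0 1"
    by (auto simp: abs_subgradient_def)
  then show ?thesis by simp
qed (simp add: abs_subgradient_def)

definition frob1_subdiff :: "real^'c^'r \<Rightarrow> (real^'c^'r) set" where
  "frob1_subdiff L = {\<Lambda>. \<forall>i j. abs_subgradient (L$i$j) (\<Lambda>$i$j)}"

lemma frob1_dir_deriv_eq_inner_subgradient:
  "\<exists>\<Lambda>\<in>frob1_subdiff L. (\<Sum>i\<in>UNIV. \<Sum>j\<in>UNIV. abs_dir_deriv (L$i$j) (M$i$j)) = inner \<Lambda> M"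
proof
  let ?\<Lambda> = "\<chi> i j. if L$i$j = 0 then sgn (M$i$j) else sgn (L$i$j)"
  show "?\<Lambda> \<in> frob1_subdiff L"
    by (simp add: frob1_subdiff_def abs_subgradient_def sgn_if)
  show "(\<Sum>i\<in>UNIV. \<Sum>j\<in>UNIV. abs_dir_deriv (L$i$j) (M$i$j)) = inner ?\<Lambda> M"
    unfolding inner_matrix_eq_sum abs_dir_deriv_def
    by (intro sum.cong refl) (simp add: abs_sgn mult.commute)
qed

lemma convex_frob1_subdiff: "convex (frob1_subdiff L)"
  using convex_abs_subgradient unfolding convex_def frob1_subdiff_def by simp

lemma compact_frob1_subdiff:
  fixes L :: "real^'c^'r"
  shows "compact (frob1_subdiff L)"
proof -
  have "closed {l. abs_subgradient x l}" for x
    by (cases "x = 0") (auto simp: abs_subgradient_def intro!: closed_Collect_le continuous_intros)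
  then have "closed {\<Lambda> :: real^'c^'r. \<Lambda>$i$j \<in> {l. abs_subgradient (L$i$j) l}}" for i j
    by (rule continuous_closed_vimage[of _ "\<lambda>\<Lambda>. \<Lambda>$i$j", unfolded vimage_def])
       (intro continuous_intros)
  then have "closed (frob1_subdiff L)"
    unfolding frob1_subdiff_def by (intro closed_Collect_all) simp
  moreover have "bounded (frob1_subdiff L)"
    unfolding bounded_iff
  proof (intro exI ballI)
    fix \<Lambda> assume "\<Lambda> \<in> frob1_subdiff L"
    then have le1: "\<bar>\<Lambda>$i$j\<bar> \<le> 1" for i j
      by (cases "L$i$j = 0") (auto simp: frob1_subdiff_def abs_subgradient_def sgn_if)
    have "norm \<Lambda> \<le> (\<Sum>i\<in>UNIV. norm (\<Lambda>$i))"
      by (simp add: norm_vec_def L2_set_le_sum)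
    also have "\<dots> \<le> (\<Sum>i\<in>UNIV. \<Sum>j\<in>UNIV. \<bar>\<Lambda>$i$j\<bar>)"
      by (intro sum_mono norm_le_l1_cart)
    also have "\<dots> \<le> (\<Sum>i\<in>(UNIV::'r set). \<Sum>j\<in>(UNIV::'c set). 1)"
      by (intro sum_mono le1)
    finally show "norm \<Lambda> \<le> (\<Sum>i\<in>(UNIV::'r set). \<Sum>j\<in>(UNIV::'c set). 1)" .
  qed
  ultimately show ?thesis by (simp add: compact_eq_bounded_closed)
qed

lemma ones_mem_frob1_subdiff: "nonneg_mat X \<Longrightarrow> (\<chi> i j. 1) \<in> frob1_subdiff X"
  by (auto simp: frob1_subdiff_def abs_subgradient_def nonneg_mat_def sgn_if order_less_le)

lemma frob1_subdiff_proj_fixpoint: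
  assumes "\<Lambda> \<in> frob1_subdiff X" and "0 < c"
  shows "\<Lambda> = (\<chi> i j. (\<Lambda>$i$j + c * X$i$j) / max 1 \<bar>\<Lambda>$i$j + c * X$i$j\<bar>)"
  unfolding vec_eq_iff vec_lambda_beta
  using assms by (auto simp: frob1_subdiff_def intro!: abs_subgradient_proj_fixpoint)

lemma uminus_eq_min_complementary:
  fixes G X :: "real^'c^'r"
  assumes "\<forall>i j. 0 \<le> G$i$j \<and> (0 < X$i$j \<longrightarrow> G$i$j = 0)" and "nonneg_mat X" and "0 < c"
  shows "- G = (\<chi> i j. min ((- G)$i$j + c * X$i$j) 0)"
proof -
  have "- G$i$j = min (- G$i$j + c * X$i$j) 0" for i j
    using assms by (cases "X$i$j = 0") (auto simp: nonneg_mat_def order_less_le)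
  then show ?thesis
    unfolding vec_eq_iff vec_lambda_beta vector_uminus_component by blast
qed

lemma eventually_nonneg_mat_add_scaleR:
  fixes X D :: "real^'c^'r"
  assumes "nonneg_mat X" and "\<forall>i j. X$i$j = 0 \<longrightarrow> 0 \<le> D$i$j"
  shows "\<forall>\<^sub>F t in at_right 0. nonneg_mat (X + t *\<^sub>R D)"
proof -
  have "\<forall>\<^sub>F t in at_right 0. 0 \<le> X$i$j + t * D$i$j" for i j
  proof (cases "X$i$j = 0")
    case True
    with assms(2) show ?thesis
      by (auto intro: eventually_mono[OF eventually_at_right_less[of 0]])
  next
    case False
    then have "0 < X$i$j" using assms(1) by (simp add: nonneg_mat_def order.not_eq_order_implies_strict)
    moreover have "((\<lambda>t. X$i$j + t * D$i$j) \<longlongrightarrow> X$i$j) (at_right 0)"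
      by (intro tendsto_eq_intros) auto
    ultimately have "\<forall>\<^sub>F t in at_right 0. 0 < X$i$j + t * D$i$j"
      by (simp add: order_tendstoD(1))
    then show ?thesis by eventually_elim simp
  qed
  then have "\<forall>\<^sub>F t in at_right 0. \<forall>i j. 0 \<le> X$i$j + t * D$i$j"
    by (intro eventually_all_finite allI)
  then show ?thesis by eventually_elim (simp add: nonneg_mat_def)
qed

lemma local_min_J_along_feasible_direction:
  assumes "local_min_J Y \<alpha> \<nu> \<gamma> A P"
    and "\<forall>i j. A$i$j = 0 \<longrightarrow> 0 \<le> DA$i$j" and "\<forall>i j. P$i$j = 0 \<longrightarrow> 0 \<le> DP$i$j"
  shows "\<forall>\<^sub>F t in at_right 0. nonneg_mat (A + t *\<^sub>R DA) \<and> nonneg_mat (P + t *\<^sub>R DP)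
    \<and> Jobj Y \<alpha> \<nu> \<gamma> A P \<le> Jobj Y \<alpha> \<nu> \<gamma> (A + t *\<^sub>R DA) (P + t *\<^sub>R DP)"
proof -
  obtain e where "e > 0" and min: "\<And>A' P'. nonneg_mat A' \<Longrightarrow> nonneg_mat P'
      \<Longrightarrow> dist A' A < e \<Longrightarrow> dist P' P < e \<Longrightarrow> Jobj Y \<alpha> \<nu> \<gamma> A P \<le> Jobj Y \<alpha> \<nu> \<gamma> A' P'"
    and "nonneg_mat A" and "nonneg_mat P"
    using assms(1) unfolding local_min_J_def by blast
  have "((\<lambda>t. X + t *\<^sub>R D) \<longlongrightarrow> X) (at_right 0)" for X D :: "'v::real_normed_vector"
    by (intro tendsto_eq_intros) auto
  then have close: "\<forall>\<^sub>F t in at_right 0. dist (X + t *\<^sub>R D) X < e" for X D :: "'v::real_normed_vector"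
    using \<open>e > 0\<close> by (rule tendstoD)
  show ?thesis
    using eventually_nonneg_mat_add_scaleR[OF \<open>nonneg_mat A\<close> assms(2)]
      eventually_nonneg_mat_add_scaleR[OF \<open>nonneg_mat P\<close> assms(3)] close[of A DA] close[of P DP]
    by eventually_elim (simp add: min)
qed

lemma nonneg_coeff_of_eventually_nonneg:
  fixes a b :: real
  assumes "\<forall>\<^sub>F t in at_right 0. 0 \<le> t * a + t^2 * b"
  shows "0 \<le> a"
proof -
  have "\<forall>\<^sub>F t in at_right 0. 0 \<le> a + t * b"
    using assms eventually_at_right_less[of 0]
  proof eventually_elim
    case (elim t)
    then have "0 \<le> t * (a + t * b)" by (simp add: algebra_simps power2_eq_square)
    with \<open>0 < t\<close> show ?case by (simp add: zero_le_mult_iff)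
  qed
  moreover have "((\<lambda>t. a + t * b) \<longlongrightarrow> a) (at_right 0)"
    by (intro tendsto_eq_intros) auto
  ultimately show ?thesis
    by (intro tendsto_lowerbound) (auto simp: trivial_limit_at_right_real)
qed

lemma Jobj_add_scaleR_left:
  assumes "nonneg_mat A" and "nonneg_mat (A + t *\<^sub>R D)"
  shows "Jobj Y \<alpha> \<nu> \<gamma> (A + t *\<^sub>R D) P = Jobj Y \<alpha> \<nu> \<gamma> A P
    + t * inner D (2 *\<^sub>R (A ** P ** transpose P) - 2 *\<^sub>R (Y ** transpose P) + \<alpha> *\<^sub>R (\<chi> i j. 1))
    + t^2 * (norm (D ** P))^2"
proof -
  have res: "Y - (A + t *\<^sub>R D) ** P = (Y - A ** P) - t *\<^sub>R (D ** P)"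
    by (simp add: matrix_add_rdistrib scalar_matrix_assoc)
  have cross: "inner (Y - A ** P) (D ** P) = inner (Y ** transpose P - A ** P ** transpose P) D"
    by (simp only: inner_matrix_mult_right matrix_diff_rdistrib)
  show ?thesis
    unfolding Jobj_def frob2_eq_norm frob1_add_nonneg[OF assms] res norm_diff_scaleR_power2 cross
    by (simp add: inner_add_right inner_diff_right inner_diff_left inner_commute algebra_simps)
qed

lemma eventually_Jobj_add_scaleR_right_le:
  fixes Y :: "real^'m^'n" and A :: "real^'k^'n" and P D :: "real^'m^'k"
  assumes "0 \<le> \<gamma>" and "nonneg_mat P" and "\<forall>i j. P$i$j = 0 \<longrightarrow> 0 \<le> D$i$j"
  shows "\<forall>\<^sub>F t in at_right 0.
    Jobj Y \<alpha> \<nu> \<gamma> A (P + t *\<^sub>R D) \<le> Jobj Y \<alpha> \<nu> \<gamma> A P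
    + t * (inner D (- 2 *\<^sub>R (transpose A ** Y) + 2 *\<^sub>R (transpose A ** A ** P) + \<nu> *\<^sub>R (\<chi> i j. 1))
        + \<gamma> * (\<Sum>i\<in>UNIV. \<Sum>j\<in>UNIV. abs_dir_deriv ((P ** transpose P - mat 1)$i$j)
                                    ((P ** transpose D + D ** transpose P)$i$j)))
    + t^2 * ((norm (A ** D))^2 + \<gamma> * frob1 (D ** transpose D))"
  using eventually_frob1_add_quadratic_le[of "P ** transpose P - mat 1"
      "P ** transpose D + D ** transpose P" "D ** transpose D"]
    eventually_nonneg_mat_add_scaleR[OF assms(2,3)]
proof eventually_elim
  case (elim t)
  have res: "Y - A ** (P + t *\<^sub>R D) = (Y - A ** P) - t *\<^sub>R (A ** D)"
    by (simp add: matrix_add_ldistrib matrix_scalar_ac scalar_matrix_assoc[symmetric])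
  have cross: "inner (Y - A ** P) (A ** D) = inner (transpose A ** Y - transpose A ** A ** P) D"
    by (simp only: inner_matrix_mult_left matrix_diff_ldistrib matrix_mul_assoc)
  have fit: "(frob2 (Y - A ** (P + t *\<^sub>R D)))^2 = (frob2 (Y - A ** P))^2
      + t * (inner D (- 2 *\<^sub>R (transpose A ** Y)) + inner D (2 *\<^sub>R (transpose A ** A ** P)))
      + t^2 * (norm (A ** D))^2"
    unfolding frob2_eq_norm res norm_diff_scaleR_power2 cross
    by (simp add: inner_diff_left inner_commute algebra_simps)
  have gram: "\<gamma> * frob1 ((P + t *\<^sub>R D) ** transpose (P + t *\<^sub>R D) - mat 1)
      \<le> \<gamma> * (frob1 (P ** transpose P - mat 1)
        + t * (\<Sum>i\<in>UNIV. \<Sum>j\<in>UNIV. abs_dir_deriv ((P ** transpose P - mat 1)$i$j)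
                                    ((P ** transpose D + D ** transpose P)$i$j))
        + t^2 * frob1 (D ** transpose D))"
    using elim(1) \<open>0 \<le> \<gamma>\<close> unfolding gram_add_scaleR by (rule mult_left_mono)
  have "\<nu> * frob1 (P + t *\<^sub>R D) = \<nu> * frob1 P + t * inner D (\<nu> *\<^sub>R (\<chi> i j. 1))"
    using elim by (simp add: frob1_add_nonneg[OF assms(2)] algebra_simps)
  with fit gram show ?case
    unfolding Jobj_def inner_add_right by (simp only: ring_distribs mult_ac)
qed

lemma local_min_J_first_order_left:
  fixes Y :: "real^'m^'n" and A D :: "real^'k^'n" and P :: "real^'m^'k"
  assumes "local_min_J Y \<alpha> \<nu> \<gamma> A P" and "\<forall>i j. A$i$j = 0 \<longrightarrow> 0 \<le> D$i$j"
  shows "0 \<le> inner D (2 *\<^sub>R (A ** P ** transpose P) - 2 *\<^sub>R (Y ** transpose P) + \<alpha> *\<^sub>R (\<chi> i j. 1))"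
    (is "0 \<le> ?g")
proof -
  have "nonneg_mat A" using assms(1) by (simp add: local_min_J_def)
  have "\<forall>i j. P$i$j = 0 \<longrightarrow> 0 \<le> (0 :: real^'m^'k)$i$j" by simp
  from local_min_J_along_feasible_direction[OF assms this]
  have "\<forall>\<^sub>F t in at_right 0. 0 \<le> t * ?g + t^2 * (norm (D ** P))^2"
  proof eventually_elim
    case (elim t)
    then show ?case
      using Jobj_add_scaleR_left[OF \<open>nonneg_mat A\<close>, of t D Y \<alpha> \<nu> \<gamma> P] by simp
  qed
  then show ?thesis by (rule nonneg_coeff_of_eventually_nonneg)
qed

lemma local_min_J_first_order_right:
  fixes Y :: "real^'m^'n" and A :: "real^'k^'n" and P D :: "real^'m^'k"
  assumes "local_min_J Y \<alpha> \<nu> \<gamma> A P" and "0 \<le> \<gamma>" and "\<forall>i j. P$i$j = 0 \<longrightarrow> 0 \<le> D$i$j"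
  shows "0 \<le> inner D (- 2 *\<^sub>R (transpose A ** Y) + 2 *\<^sub>R (transpose A ** A ** P) + \<nu> *\<^sub>R (\<chi> i j. 1))
    + \<gamma> * (\<Sum>i\<in>UNIV. \<Sum>j\<in>UNIV. abs_dir_deriv ((P ** transpose P - mat 1)$i$j)
                                 ((P ** transpose D + D ** transpose P)$i$j))"
    (is "0 \<le> ?g")
proof -
  have "nonneg_mat P" using assms(1) by (simp add: local_min_J_def)
  have "\<forall>i j. A$i$j = 0 \<longrightarrow> 0 \<le> (0 :: real^'k^'n)$i$j" by simp
  from local_min_J_along_feasible_direction[OF assms(1) this assms(3)]
    eventually_Jobj_add_scaleR_right_le[OF assms(2) \<open>nonneg_mat P\<close> assms(3),
        where Y = Y and A = A and \<alpha> = \<alpha> and \<nu> = \<nu>]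
  have "\<forall>\<^sub>F t in at_right 0. 0 \<le> t * ?g + t^2 * ((norm (A ** D))^2 + \<gamma> * frob1 (D ** transpose D))"
    by eventually_elim auto
  then show ?thesis by (rule nonneg_coeff_of_eventually_nonneg)
qed

lemma local_min_J_KKT_left:
  fixes Y :: "real^'m^'n" and A :: "real^'k^'n" and P :: "real^'m^'k"
  assumes "local_min_J Y \<alpha> \<nu> \<gamma> A P"
  defines "G \<equiv> 2 *\<^sub>R (A ** P ** transpose P) - 2 *\<^sub>R (Y ** transpose P) + \<alpha> *\<^sub>R (\<chi> i j. 1)"
  shows "\<forall>i j. 0 \<le> G$i$j \<and> (0 < A$i$j \<longrightarrow> G$i$j = 0)"
proof (intro allI)
  fix i j
  have coord: "inner (s *\<^sub>R axis i (axis j 1)) G = s * G$i$j" for s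
    by (simp add: inner_axis')
  have nonneg: "0 \<le> s * G$i$j" if "0 \<le> s \<or> 0 < A$i$j" for s
  proof -
    have "0 \<le> inner (s *\<^sub>R axis i (axis j 1)) G"
      unfolding G_def using that
      by (intro local_min_J_first_order_left[OF assms(1)]) (auto simp: axis_def)
    then show ?thesis by (simp only: coord)
  qed
  show "0 \<le> G$i$j \<and> (0 < A$i$j \<longrightarrow> G$i$j = 0)"
    using nonneg[of 1] nonneg[of "-1"] by auto
qed

lemma local_min_J_KKT_right:
  fixes Y :: "real^'m^'n" and A :: "real^'k^'n" and P :: "real^'m^'k"
  assumes lm: "local_min_J Y \<alpha> \<nu> \<gamma> A P" and "0 \<le> \<gamma>"
  defines "c \<equiv> - 2 *\<^sub>R (transpose A ** Y) + 2 *\<^sub>R (transpose A ** A ** P) + \<nu> *\<^sub>R (\<chi> i j. 1)"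
  shows "\<exists>\<Lambda>\<in>frob1_subdiff (P ** transpose P - mat 1). \<forall>i j.
    0 \<le> (c + \<gamma> *\<^sub>R ((\<Lambda> + transpose \<Lambda>) ** P))$i$j
    \<and> (0 < P$i$j \<longrightarrow> (c + \<gamma> *\<^sub>R ((\<Lambda> + transpose \<Lambda>) ** P))$i$j = 0)"
proof (rule ccontr)
  \<comment> \<open>Otherwise the normal of a hyperplane separating K from S is a feasible direction along
    which every element of K, hence the directional derivative of J, is negative.\<close>
  assume no_multiplier: "\<not> ?thesis"
  define g where "g \<Lambda> = \<gamma> *\<^sub>R ((\<Lambda> + transpose \<Lambda>) ** P)" for \<Lambda> :: "real^'k^'k"
  define K where "K = (+) c ` g ` frob1_subdiff (P ** transpose P - mat 1)"
  define S where "S = {v :: real^'m^'k. \<forall>i j. 0 \<le> v$i$j \<and> (0 < P$i$j \<longrightarrow> v$i$j = 0)}"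
  have "linear g"
    unfolding g_def by (intro linear_compose_scale_right linear_symmetrized_product)
  then have "convex K" and "compact K"
    unfolding K_def
    by (auto intro!: convex_translation convex_linear_image compact_translation
        compact_continuous_image linear_continuous_on linear_conv_bounded_linear[THEN iffD1]
        convex_frob1_subdiff compact_frob1_subdiff)
  moreover have "K \<noteq> {}"
    using frob1_dir_deriv_eq_inner_subgradient unfolding K_def by blast
  moreover have "convex S"
    unfolding S_def convex_def by (auto intro!: add_nonneg_nonneg)
  moreover have "closed S"
  proof -
    have "open {v :: real^'m^'k. 0 < P$i$j}" for i j by (cases "0 < P$i$j") auto
    then show ?thesis unfolding S_def
      by (intro closed_Collect_all closed_Collect_conj closed_Collect_le closed_Collect_imp
          closed_Collect_eq continuous_intros)
  qed
  moreover have "S \<inter> K = {}"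
    using no_multiplier unfolding S_def K_def g_def by auto
  ultimately obtain a b where below: "\<forall>v\<in>S. inner a v < b" and above: "\<forall>v\<in>K. b < inner a v"
    using separating_hyperplane_closed_compact by blast
  have "0 \<in> S" by (simp add: S_def)
  with below have "0 < b" by force
  have "a$i$j \<le> 0" if "P$i$j = 0" for i j
  proof (rule ccontr)
    assume "\<not> a$i$j \<le> 0"
    then have "(b / a$i$j) *\<^sub>R axis i (axis j 1) \<in> S"
      using \<open>0 < b\<close> that by (auto simp: S_def axis_def)
    with below have "inner a ((b / a$i$j) *\<^sub>R axis i (axis j 1)) < b" by blast
    with \<open>\<not> a$i$j \<le> 0\<close> show False by (simp add: inner_axis)
  qed
  then have feasible: "\<forall>i j. P$i$j = 0 \<longrightarrow> 0 \<le> (- a)$i$j" by simp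
  obtain \<Lambda> where "\<Lambda> \<in> frob1_subdiff (P ** transpose P - mat 1)"
    and dir: "(\<Sum>i\<in>UNIV. \<Sum>j\<in>UNIV. abs_dir_deriv ((P ** transpose P - mat 1)$i$j)
                          ((P ** transpose (- a) + (- a) ** transpose P)$i$j))
      = inner \<Lambda> (P ** transpose (- a) + (- a) ** transpose P)"
    using frob1_dir_deriv_eq_inner_subgradient by blast
  have "0 \<le> inner (- a) c + \<gamma> * inner \<Lambda> (P ** transpose (- a) + (- a) ** transpose P)"
    using local_min_J_first_order_right[OF lm \<open>0 \<le> \<gamma>\<close> feasible] unfolding c_def dir .
  also have "\<dots> = - inner a (c + g \<Lambda>)"
    unfolding inner_symmetrized_product by (simp add: g_def inner_add_right inner_commute)
  finally have "inner a (c + g \<Lambda>) \<le> 0" by simp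
  moreover have "c + g \<Lambda> \<in> K"
    using \<open>\<Lambda> \<in> frob1_subdiff _\<close> unfolding K_def by blast
  ultimately show False using above \<open>0 < b\<close> by force
qed

theorem theorem5:
  fixes Y :: "real^'m^'n" and A :: "real^'k^'n" and P :: "real^'m^'k"
    and \<alpha> \<nu> \<gamma> c1 c2 :: real
  assumes "\<alpha> \<ge> 0" and "\<nu> \<ge> 0" and "\<gamma> \<ge> 0"
    and "local_min_J Y \<alpha> \<nu> \<gamma> A P"
    and "c1 > 0" and "c2 > 0"
  shows "\<exists>(L :: real^'k^'k) (muA :: real^'k^'n) (lamA :: real^'k^'n)
            (muP :: real^'m^'k) (lamP :: real^'m^'k) (lamL :: real^'k^'k).
     0 = 2 *\<^sub>R (A ** P ** transpose P) - 2 *\<^sub>R (Y ** transpose P) + muA + \<alpha> *\<^sub>R lamA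
   \<and> lamA = (\<chi> i j. (lamA$i$j + c2 * A$i$j) / max 1 \<bar>lamA$i$j + c2 * A$i$j\<bar>)
   \<and> muA = (\<chi> i j. min (muA$i$j + c1 * A$i$j) 0)
   \<and> 0 = - 2 *\<^sub>R (transpose A ** Y) + 2 *\<^sub>R (transpose A ** A ** P) + muP + \<nu> *\<^sub>R lamP
          + \<gamma> *\<^sub>R ((lamL + transpose lamL) ** P)
   \<and> lamP = (\<chi> i j. (lamP$i$j + c2 * P$i$j) / max 1 \<bar>lamP$i$j + c2 * P$i$j\<bar>)
   \<and> L = P ** transpose P - mat 1
   \<and> lamL = (\<chi> i j. (lamL$i$j + c2 * L$i$j) / max 1 \<bar>lamL$i$j + c2 * L$i$j\<bar>)
   \<and> muP = (\<chi> i j. min (muP$i$j + c1 * P$i$j) 0)"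
proof -
  have "nonneg_mat A" and "nonneg_mat P"
    using assms(4) by (simp_all add: local_min_J_def)
  define G where "G = 2 *\<^sub>R (A ** P ** transpose P) - 2 *\<^sub>R (Y ** transpose P) + \<alpha> *\<^sub>R (\<chi> i j. 1)"
  define c where "c = - 2 *\<^sub>R (transpose A ** Y) + 2 *\<^sub>R (transpose A ** A ** P) + \<nu> *\<^sub>R (\<chi> i j. 1)"
  have G: "\<forall>i j. 0 \<le> G$i$j \<and> (0 < A$i$j \<longrightarrow> G$i$j = 0)"
    using local_min_J_KKT_left[OF assms(4)] unfolding G_def .
  obtain \<Lambda> where \<Lambda>: "\<Lambda> \<in> frob1_subdiff (P ** transpose P - mat 1)"
    and v: "\<forall>i j. 0 \<le> (c + \<gamma> *\<^sub>R ((\<Lambda> + transpose \<Lambda>) ** P))$i$j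
      \<and> (0 < P$i$j \<longrightarrow> (c + \<gamma> *\<^sub>R ((\<Lambda> + transpose \<Lambda>) ** P))$i$j = 0)"
    using local_min_J_KKT_right[OF assms(4,3)] unfolding c_def by blast
  define v where "v = c + \<gamma> *\<^sub>R ((\<Lambda> + transpose \<Lambda>) ** P)"
  \<comment> \<open>Since A and P are nonnegative, the all-ones matrix is a subgradient of the l1-norm at
    both; the sign constraints are carried entirely by mu_A and mu_P.\<close>
  show ?thesis
  proof (intro exI conjI)
    show "0 = 2 *\<^sub>R (A ** P ** transpose P) - 2 *\<^sub>R (Y ** transpose P) + - G + \<alpha> *\<^sub>R (\<chi> i j. 1)"
      by (simp add: G_def)
    show "- G = (\<chi> i j. min ((- G)$i$j + c1 * A$i$j) 0)"
      using G \<open>nonneg_mat A\<close> \<open>0 < c1\<close> by (rule uminus_eq_min_complementary)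
    show "(\<chi> i j. 1) = (\<chi> i j. ((\<chi> i j. 1)$i$j + c2 * A$i$j) / max 1 \<bar>(\<chi> i j. 1)$i$j + c2 * A$i$j\<bar>)"
      using ones_mem_frob1_subdiff[OF \<open>nonneg_mat A\<close>] \<open>0 < c2\<close> by (rule frob1_subdiff_proj_fixpoint)
    show "0 = - 2 *\<^sub>R (transpose A ** Y) + 2 *\<^sub>R (transpose A ** A ** P) + - v + \<nu> *\<^sub>R (\<chi> i j. 1)
          + \<gamma> *\<^sub>R ((\<Lambda> + transpose \<Lambda>) ** P)"
      by (simp add: v_def c_def)
    show "- v = (\<chi> i j. min ((- v)$i$j + c1 * P$i$j) 0)"
      using v[folded v_def] \<open>nonneg_mat P\<close> \<open>0 < c1\<close> by (rule uminus_eq_min_complementary)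
    show "(\<chi> i j. 1) = (\<chi> i j. ((\<chi> i j. 1)$i$j + c2 * P$i$j) / max 1 \<bar>(\<chi> i j. 1)$i$j + c2 * P$i$j\<bar>)"
      using ones_mem_frob1_subdiff[OF \<open>nonneg_mat P\<close>] \<open>0 < c2\<close> by (rule frob1_subdiff_proj_fixpoint)
    show "\<Lambda> = (\<chi> i j. (\<Lambda>$i$j + c2 * (P ** transpose P - mat 1)$i$j)
        / max 1 \<bar>\<Lambda>$i$j + c2 * (P ** transpose P - mat 1)$i$j\<bar>)"
      using \<Lambda> \<open>0 < c2\<close> by (rule frob1_subdiff_proj_fixpoint)
  qed (rule refl)
qed

end
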